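(* For every integer $d\ge 2$, the uniform probability measure $\mu^{\{0,1\}}_{n,d}$ on the set of $1$-Lipschitz functions $f\colon V(\mathbb{T}^n_d)\to\mathbb{Z}$ taking values in $\{0,1\}$ at every vertex at distance exactly $n$ from the root converges (in the local weak sense) as $n\to\infty$.
   Context: A $d$-ary tree $\mathbb{T}_d$ is an infinite tree with a distinguished root vertex $\rho$ of degree $d$, all other vertices having degree $d+1$. $\mathbb{T}^n_d$ is the finite subtree induced by the vertices at graph distance at most $n$ from $\rho$; its leaves are the vertices at distance exactly $n$. A $1$-Lipschitz function is an integer-valued function $f$ with $|f(u)-f(v)|\le 1$ for all adjacent $u,v$. Local weak convergence means: for every fixed $r\ge0$, the law of the restriction of $f$ to the vertices within distance $r$ of $\rho$ converges as $n\to\infty$ to a probability measure. *)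

theory Defs
  imports "HOL-Probability.Probability"
begin

text \<open>Vertices of the d-ary tree: finite words over the alphabet {0..<d};
  the root is the empty word, the children of v are v @ [i] for i < d.
  The depth (graph distance to the root) of a word is its length.\<close>

definition tree_ball :: "nat \<Rightarrow> nat \<Rightarrow> nat list set" where
  "tree_ball d n = {xs. set xs \<subseteq> {..<d} \<and> length xs \<le> n}"

definition tree_adj :: "nat list \<Rightarrow> nat list \<Rightarrow> bool" where
  "tree_adj u v \<longleftrightarrow> (\<exists>i. v = u @ [i]) \<or> (\<exists>i. u = v @ [i])"

text \<open>Functions are normalised to 0 outside the vertex set,
  so that this set is in bijection with the functions V(T^n_d) -> Z.\<close>
definition lip01 :: "nat \<Rightarrow> nat \<Rightarrow> (nat list \<Rightarrow> int) set" where
  "lip01 d n = {f. (\<forall>u\<in>tree_ball d n. \<forall>v\<in>tree_ball d n. tree_adj u v \<longrightarrow> \<bar>f u - f v\<bar> \<le> 1)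
                 \<and> (\<forall>u\<in>tree_ball d n. length u = n \<longrightarrow> f u \<in> {0, 1})
                 \<and> (\<forall>u. u \<notin> tree_ball d n \<longrightarrow> f u = 0)}"

definition mu01 :: "nat \<Rightarrow> nat \<Rightarrow> (nat list \<Rightarrow> int) pmf" where
  "mu01 d n = pmf_of_set (lip01 d n)"

definition restr_ball :: "nat \<Rightarrow> nat \<Rightarrow> (nat list \<Rightarrow> int) \<Rightarrow> (nat list \<Rightarrow> int)" where
  "restr_ball d r f = (\<lambda>v. if v \<in> tree_ball d r then f v else 0)"

end

theory Submission
  imports Defs
begin

text \<open>Let V_h(k) be the number of 1-Lipschitz functions on the tree of depth h with values
  in {0, 1} at the leaves and a root value at distance k from {0, 1}. Cutting the tree at the
  root gives V_(h+1)(k) = (V_h(k+1) + V_h(k) + V_h(k-1))^d, and cutting it along the sphere of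
  radius r shows that, at depth h + r, the law of the restriction to the r-ball is proportional
  to the product over the sphere of the ratios V_h(k_v) / V_h(0). For d \<ge> 2 the recursion
  preserves the halving 2 V(k+1) \<le> V(k) and the monotone likelihood ratio order between
  consecutive generations, so each ratio increases with h and stays below 2^-k, and the
  normalising constants converge as well. Hence every cylinder probability converges, and the
  geometric bound on the root value makes the family tight, so the pointwise limit is a
  probability mass function.\<close>

section \<open>The recursion for the counts\<close>

lemma geometric_tail_le: "(\<Sum>k\<in>{M<..n}. (1/2::real) ^ k) \<le> (1/2) ^ M"
proof (cases "M < n")
  case True
  have "(\<Sum>k\<in>{M<..n}. (1/2::real) ^ k) = (\<Sum>k=Suc M..n. (1/2) ^ k)"
    by (rule sum.cong) auto
  also have "\<dots> = ((1/2) ^ Suc M - (1/2) ^ Suc n) / (1 - 1/2)"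
    using True sum_gp[of "1/2::real" "Suc M" n] by simp
  also have "\<dots> = (1/2) ^ M - (1/2) ^ n"
    by simp
  finally show ?thesis by simp
qed simp

text \<open>At \<open>k = 0\<close> the truncated \<open>k - 1 = 0\<close> is intended: the neighbours \<open>-1, 0, 1\<close> of the
  root value \<open>0\<close> lie at distances \<open>1, 0, 0\<close> from \<open>{0, 1}\<close>.\<close>
definition branch_op :: "nat \<Rightarrow> (nat \<Rightarrow> real) \<Rightarrow> nat \<Rightarrow> real" where
  "branch_op d a k = (a (Suc k) + a k + a (k - 1)) ^ d"

lemma branch_op_nonneg: "(\<And>k. 0 \<le> a k) \<Longrightarrow> 0 \<le> branch_op d a k"
  by (simp add: branch_op_def)

lemma branch_op_halving:
  assumes "2 \<le> d" and nonneg: "\<And>k. 0 \<le> a k" and halving: "\<And>k. 2 * a (Suc k) \<le> a k"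
  shows "2 * branch_op d a (Suc k) \<le> branch_op d a k"
proof -
  define S1 where "S1 = a (Suc (Suc k)) + a (Suc k) + a k"
  define S0 where "S0 = a (Suc k) + a k + a (k - 1)"
  have "a k \<le> a (k - 1)"
    using halving[of "k - 1"] nonneg[of k] by (cases k) auto
  \<comment> \<open>extremal case: \<open>a (k + 2) = a k / 4\<close>, \<open>a (k + 1) = a k / 2\<close>, \<open>a (k - 1) = a k\<close>\<close>
  then have S1_le: "S1 \<le> 7/10 * S0"
    unfolding S1_def S0_def using halving[of k] halving[of "Suc k"] nonneg[of "Suc k"] by simp
  have S1_nonneg: "0 \<le> S1"
    unfolding S1_def using nonneg by (simp add: add_nonneg_nonneg)
  have "S1 ^ d \<le> (7/10 * S0) ^ d"
    using S1_le S1_nonneg by (rule power_mono)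
  also have "\<dots> = (7/10) ^ d * S0 ^ d"
    by (rule power_mult_distrib)
  also have "\<dots> \<le> (7/10) ^ 2 * S0 ^ d"
    using S1_le S1_nonneg \<open>2 \<le> d\<close> by (intro mult_right_mono power_decreasing) auto
  moreover have "0 \<le> S0 ^ d"
    using S1_le S1_nonneg by simp
  ultimately have "2 * S1 ^ d \<le> S0 ^ d"
    by (simp add: power2_eq_square)
  then show ?thesis
    by (simp add: branch_op_def S1_def S0_def)
qed

text \<open>\<open>ratio_incr a b\<close>: the ratio \<open>b k / a k\<close> is nondecreasing in \<open>k\<close>, cross-multiplied so that
  zeros are allowed.\<close>
definition ratio_incr :: "(nat \<Rightarrow> real) \<Rightarrow> (nat \<Rightarrow> real) \<Rightarrow> bool" where
  "ratio_incr a b \<longleftrightarrow> (\<forall>k. a (Suc k) * b k \<le> b (Suc k) * a k)"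

lemma ratio_incr_le:
  assumes nonneg: "\<And>k. 0 \<le> a k" "\<And>k. 0 \<le> b k"
    and decr: "\<And>k. a (Suc k) \<le> a k" "\<And>k. b (Suc k) \<le> b k"
    and "ratio_incr a b" and "q \<le> p"
  shows "a p * b q \<le> b p * a q"
  using \<open>q \<le> p\<close>
proof (induction p)
  case (Suc p)
  show ?case
  proof (cases "q = Suc p")
    case False
    then have IH: "a p * b q \<le> b p * a q"
      using Suc by simp
    have step: "a (Suc p) * b p \<le> b (Suc p) * a p"
      using \<open>ratio_incr a b\<close> by (simp add: ratio_incr_def)
    show ?thesis
    proof (cases "b p = 0")
      case True
      have "b (Suc p) = 0"
        using True decr(2)[of p] nonneg(2)[of "Suc p"] by simp
      moreover have "a p * b q = 0"
        using IH True nonneg(1)[of p] nonneg(2)[of q]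
        by (intro antisym) (simp_all add: mult_nonneg_nonneg)
      moreover have "a p = 0 \<Longrightarrow> a (Suc p) = 0"
        using decr(1)[of p] nonneg(1)[of "Suc p"] by simp
      ultimately show ?thesis
        by (cases "a p = 0") auto
    next
      case False
      then have "0 < b p"
        using nonneg(2)[of p] by simp
      have "a (Suc p) * b q * b p = (a (Suc p) * b p) * b q"
        by simp
      also have "\<dots> \<le> (b (Suc p) * a p) * b q"
        using step nonneg(2)[of q] by (rule mult_right_mono)
      also have "\<dots> \<le> b (Suc p) * (b p * a q)"
        using IH nonneg(2)[of "Suc p"] by (simp add: mult_left_mono mult.assoc)
      finally show ?thesis
        using \<open>0 < b p\<close> by (simp add: mult.commute mult.left_commute)
    qed
  qed simp
qed simp

lemma ratio_incr_branch_op: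
  assumes nonneg: "\<And>k. 0 \<le> a k" "\<And>k. 0 \<le> b k"
    and decr: "\<And>k. a (Suc k) \<le> a k" "\<And>k. b (Suc k) \<le> b k"
    and "ratio_incr a b"
  shows "ratio_incr (branch_op d a) (branch_op d b)"
  unfolding ratio_incr_def
proof
  fix k
  have le: "a p * b q \<le> b p * a q" if "q \<le> p" for p q
    using ratio_incr_le[OF nonneg decr \<open>ratio_incr a b\<close> that] .
  define A1 where "A1 = a (Suc (Suc k)) + a (Suc k) + a k"
  define A0 where "A0 = a (Suc k) + a k + a (k - 1)"
  define B1 where "B1 = b (Suc (Suc k)) + b (Suc k) + b k"
  define B0 where "B0 = b (Suc k) + b k + b (k - 1)"
  \<comment> \<open>after expanding, the mixed terms cancel and every remaining pair is an instance of \<open>le\<close>\<close>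
  have "A1 * B0 \<le> B1 * A0"
  proof (cases k)
    case 0
    then show ?thesis
      using le[of 1 2] le[of 0 2] le[of 0 1]
      by (simp add: A1_def A0_def B1_def B0_def algebra_simps numeral_2_eq_2)
  next
    case (Suc j)
    then show ?thesis
      using le[of "Suc (Suc j)" "Suc (Suc (Suc j))"] le[of "Suc j" "Suc (Suc (Suc j))"]
        le[of j "Suc (Suc (Suc j))"] le[of "Suc j" "Suc (Suc j)"] le[of j "Suc (Suc j)"]
        le[of j "Suc j"]
      by (simp add: A1_def A0_def B1_def B0_def algebra_simps)
  qed
  moreover have "0 \<le> A1" "0 \<le> B0"
    unfolding A1_def B0_def using nonneg by (simp_all add: add_nonneg_nonneg)
  ultimately have "(A1 * B0) ^ d \<le> (B1 * A0) ^ d"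
    by (intro power_mono) simp_all
  then show "branch_op d a (Suc k) * branch_op d b k \<le> branch_op d b (Suc k) * branch_op d a k"
    by (simp add: branch_op_def A1_def A0_def B1_def B0_def power_mult_distrib)
qed

text \<open>\<open>lip_count d h k\<close> is the number V_h(k) above, as \<open>card_lip01_root\<close> shows.\<close>
fun lip_count :: "nat \<Rightarrow> nat \<Rightarrow> nat \<Rightarrow> real" where
  "lip_count d 0 k = (if k = 0 then 1 else 0)"
| "lip_count d (Suc h) k = branch_op d (lip_count d h) k"

lemma lip_count_Suc_eq: "lip_count d (Suc h) = branch_op d (lip_count d h)"
  by (rule ext) simp

lemma lip_count_nonneg: "0 \<le> lip_count d h k"
  by (induction h arbitrary: k) (auto intro: branch_op_nonneg)

lemma lip_count_halving: "2 \<le> d \<Longrightarrow> 2 * lip_count d h (Suc k) \<le> lip_count d h k"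
  by (induction h arbitrary: k) (auto intro!: branch_op_halving lip_count_nonneg)

lemma lip_count_decreasing: "2 \<le> d \<Longrightarrow> lip_count d h (Suc k) \<le> lip_count d h k"
  using lip_count_halving[of d h k] lip_count_nonneg[of d h "Suc k"] by linarith

lemma lip_count_le_geometric: "2 \<le> d \<Longrightarrow> lip_count d h k \<le> (1/2) ^ k * lip_count d h 0"
proof (induction k)
  case (Suc k)
  then show ?case
    using lip_count_halving[of d h k] by simp
qed simp

lemma lip_count_0_pos: "0 < lip_count d h 0"
proof (induction h)
  case (Suc h)
  then show ?case
    using lip_count_nonneg[of d h 1] by (simp add: branch_op_def add_pos_nonneg)
qed simp

lemma ratio_incr_lip_count:
  assumes "2 \<le> d"
  shows "ratio_incr (lip_count d h) (lip_count d (Suc h))"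
proof (induction h)
  case 0
  show ?case
    by (simp add: ratio_incr_def lip_count_nonneg del: lip_count.simps(2))
next
  case (Suc h)
  have "ratio_incr (branch_op d (lip_count d h)) (branch_op d (lip_count d (Suc h)))"
    by (rule ratio_incr_branch_op[of "lip_count d h" "lip_count d (Suc h)"])
      (rule lip_count_nonneg lip_count_decreasing[OF assms] Suc.IH)+
  then show ?case
    by (simp only: lip_count_Suc_eq)
qed

definition lip_ratio :: "nat \<Rightarrow> nat \<Rightarrow> nat \<Rightarrow> real" where
  "lip_ratio d h k = lip_count d h k / lip_count d h 0"

lemma lip_ratio_nonneg: "0 \<le> lip_ratio d h k"
  by (simp add: lip_ratio_def lip_count_nonneg)

lemma lip_ratio_0 [simp]: "lip_ratio d h 0 = 1"
  using lip_count_0_pos[of d h] by (simp add: lip_ratio_def)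

lemma lip_ratio_le_geometric: "2 \<le> d \<Longrightarrow> lip_ratio d h k \<le> (1/2) ^ k"
  using lip_count_le_geometric[of d h k] lip_count_0_pos[of d h]
  by (simp add: lip_ratio_def divide_simps)

lemma lip_ratio_incseq: "2 \<le> d \<Longrightarrow> incseq (\<lambda>h. lip_ratio d h k)"
proof (rule incseq_SucI)
  fix h
  assume "2 \<le> d"
  have "lip_count d h k * lip_count d (Suc h) 0 \<le> lip_count d (Suc h) k * lip_count d h 0"
    by (rule ratio_incr_le[of "lip_count d h" "lip_count d (Suc h)" 0 k])
      (rule lip_count_nonneg lip_count_decreasing ratio_incr_lip_count \<open>2 \<le> d\<close> le0)+
  then show "lip_ratio d h k \<le> lip_ratio d (Suc h) k"
    using lip_count_0_pos[of d h] lip_count_0_pos[of d "Suc h"]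
    by (simp add: lip_ratio_def divide_simps mult.commute)
qed

lemma convergent_lip_ratio: "2 \<le> d \<Longrightarrow> convergent (\<lambda>h. lip_ratio d h k)"
proof -
  assume "2 \<le> d"
  have "lip_ratio d h k \<le> 1" for h
    using lip_ratio_le_geometric[OF \<open>2 \<le> d\<close>, of h k] power_le_one[of "1/2::real" k] by simp
  then show ?thesis
    using incseq_convergent[OF lip_ratio_incseq[OF \<open>2 \<le> d\<close>]] by (meson convergentI)
qed

definition lip_ratio_sum :: "nat \<Rightarrow> nat \<Rightarrow> real" where
  "lip_ratio_sum d n = (\<Sum>k\<le>n. lip_ratio d n k)"

lemma lip_ratio_sum_eq: "lip_ratio_sum d n = 1 + (\<Sum>k\<in>{0<..n}. lip_ratio d n k)"
proof -
  have "{..n} = insert 0 {0<..n}"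
    by auto
  then show ?thesis
    by (simp add: lip_ratio_sum_def)
qed

lemma lip_ratio_sum_ge_1: "1 \<le> lip_ratio_sum d n"
  unfolding lip_ratio_sum_eq by (simp add: sum_nonneg lip_ratio_nonneg)

lemma lip_ratio_sum_tendsto: "2 \<le> d \<Longrightarrow> \<exists>S\<ge>1. lip_ratio_sum d \<longlonglongrightarrow> S"
proof -
  assume "2 \<le> d"
  have inc: "incseq (lip_ratio_sum d)"
  proof (rule incseq_SucI)
    fix n
    have "lip_ratio_sum d n \<le> (\<Sum>k\<le>n. lip_ratio d (Suc n) k)"
      unfolding lip_ratio_sum_def
      by (intro sum_mono incseqD[OF lip_ratio_incseq[OF \<open>2 \<le> d\<close>]]) simp
    also have "\<dots> \<le> lip_ratio_sum d (Suc n)"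
      unfolding lip_ratio_sum_def by (intro sum_mono2) (auto simp: lip_ratio_nonneg)
    finally show "lip_ratio_sum d n \<le> lip_ratio_sum d (Suc n)" .
  qed
  have bounded: "\<forall>n. lip_ratio_sum d n \<le> 2"
  proof
    fix n
    have "(\<Sum>k\<in>{0<..n}. lip_ratio d n k) \<le> (\<Sum>k\<in>{0<..n}. (1/2) ^ k)"
      by (intro sum_mono lip_ratio_le_geometric[OF \<open>2 \<le> d\<close>])
    also have "\<dots> \<le> 1"
      using geometric_tail_le[of 0 n] by simp
    finally show "lip_ratio_sum d n \<le> 2"
      unfolding lip_ratio_sum_eq by simp
  qed
  obtain S where "lip_ratio_sum d \<longlonglongrightarrow> S" and "\<forall>n. lip_ratio_sum d n \<le> S"
    using incseq_convergent[OF inc bounded] by blast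
  moreover have "1 \<le> S"
    using lip_ratio_sum_ge_1[of d 0] \<open>\<forall>n. lip_ratio_sum d n \<le> S\<close> by (meson order_trans)
  ultimately show ?thesis
    by blast
qed

text \<open>The normalising factor of the \<open>r\<close>-ball marginal at depth \<open>h + r\<close>, relative to \<open>d ^ r\<close>
  independent subtrees of depth \<open>h\<close>.\<close>
definition count_growth :: "nat \<Rightarrow> nat \<Rightarrow> nat \<Rightarrow> real" where
  "count_growth d r h = lip_count d (h + r) 0 / lip_count d h 0 ^ (d ^ r)"

lemma count_growth_pos: "0 < count_growth d r h"
  using lip_count_0_pos by (simp add: count_growth_def)

lemma count_growth_Suc:
  "count_growth d (Suc r) h = (lip_ratio d (h + r) 1 + 2) ^ d * count_growth d r h ^ d"
proof -
  let ?V = "lip_count d (h + r)"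
  have "lip_count d (h + Suc r) 0 = (?V 1 + 2 * ?V 0) ^ d"
    by (simp add: branch_op_def add.commute)
  also have "\<dots> = (lip_ratio d (h + r) 1 + 2) ^ d * ?V 0 ^ d"
    using lip_count_0_pos[of d "h + r"]
    by (simp add: lip_ratio_def field_simps flip: power_mult_distrib)
  moreover have "lip_count d h 0 ^ (d ^ Suc r) = (lip_count d h 0 ^ (d ^ r)) ^ d"
    by (simp add: power_mult[symmetric] mult.commute)
  ultimately show ?thesis
    by (simp add: count_growth_def power_divide)
qed

lemma count_growth_tendsto: "2 \<le> d \<Longrightarrow> \<exists>C\<ge>1. (\<lambda>h. count_growth d r h) \<longlonglongrightarrow> C"
proof (induction r)
  case 0
  have "count_growth d 0 h = 1" for h
    using lip_count_0_pos[of d h] by (simp add: count_growth_def)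
  then show ?case
    by auto
next
  case (Suc r)
  then obtain C where "1 \<le> C" and C: "(\<lambda>h. count_growth d r h) \<longlonglongrightarrow> C"
    by blast
  obtain A where A: "(\<lambda>h. lip_ratio d h 1) \<longlonglongrightarrow> A"
    using convergent_lip_ratio[OF Suc.prems] by (auto simp: convergent_def)
  have "0 \<le> A"
    using A by (rule LIMSEQ_le_const) (simp add: lip_ratio_nonneg)
  have "(\<lambda>h. (lip_ratio d (h + r) 1 + 2) ^ d * count_growth d r h ^ d) \<longlonglongrightarrow> (A + 2) ^ d * C ^ d"
    by (intro tendsto_intros C LIMSEQ_ignore_initial_segment[OF A])
  moreover have "1 \<le> (A + 2) ^ d * C ^ d"
  proof -
    have "1 \<le> (A + 2) ^ d" and "1 \<le> C ^ d"
      using \<open>0 \<le> A\<close> \<open>1 \<le> C\<close> by (simp_all add: one_le_power)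
    then have "1 * 1 \<le> (A + 2) ^ d * C ^ d"
      by (intro mult_mono) simp_all
    then show ?thesis
      by simp
  qed
  ultimately show ?case
    unfolding count_growth_Suc by blast
qed

section \<open>Lipschitz functions on the finite tree\<close>

definition tree_sphere :: "nat \<Rightarrow> nat \<Rightarrow> nat list set" where
  "tree_sphere d r = {v. set v \<subseteq> {..<d} \<and> length v = r}"

lemma finite_tree_ball: "finite (tree_ball d n)"
  by (simp add: tree_ball_def finite_lists_length_le)

lemma finite_tree_sphere: "finite (tree_sphere d r)"
  by (simp add: tree_sphere_def finite_lists_length_eq)

lemma card_tree_sphere: "card (tree_sphere d r) = d ^ r"
  using card_lists_length_eq[of "{..<d}" r] by (simp add: tree_sphere_def)

lemma tree_sphere_subset_ball: "tree_sphere d r \<subseteq> tree_ball d r"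
  by (auto simp: tree_sphere_def tree_ball_def)

lemma tree_ball_mono: "r \<le> n \<Longrightarrow> tree_ball d r \<subseteq> tree_ball d n"
  by (auto simp: tree_ball_def)

lemma tree_ball_snocD: "u @ [i] \<in> tree_ball d n \<Longrightarrow> u \<in> tree_ball d n"
  by (simp add: tree_ball_def)

lemma append_in_tree_ball_iff:
  "v \<in> tree_sphere d r \<Longrightarrow> r \<le> n \<Longrightarrow> v @ w \<in> tree_ball d n \<longleftrightarrow> w \<in> tree_ball d (n - r)"
  by (auto simp: tree_sphere_def tree_ball_def)

lemma append_in_tree_sphere_iff:
  "v \<in> tree_sphere d r \<Longrightarrow> r \<le> n \<Longrightarrow> v @ w \<in> tree_sphere d n \<longleftrightarrow> w \<in> tree_sphere d (n - r)"
  by (auto simp: tree_sphere_def)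

definition tree_lip :: "nat \<Rightarrow> nat \<Rightarrow> (nat list \<Rightarrow> int) \<Rightarrow> bool" where
  "tree_lip d n f \<longleftrightarrow> (\<forall>u i. u @ [i] \<in> tree_ball d n \<longrightarrow> \<bar>f (u @ [i]) - f u\<bar> \<le> 1)"

lemma lip01_iff:
  "f \<in> lip01 d n \<longleftrightarrow> tree_lip d n f \<and> (\<forall>u\<in>tree_sphere d n. f u \<in> {0, 1})
     \<and> (\<forall>u. u \<notin> tree_ball d n \<longrightarrow> f u = 0)"
proof -
  have "(\<forall>u\<in>tree_ball d n. \<forall>v\<in>tree_ball d n. tree_adj u v \<longrightarrow> \<bar>f u - f v\<bar> \<le> 1)
        \<longleftrightarrow> tree_lip d n f"
    unfolding tree_lip_def tree_adj_def
    by (auto dest: tree_ball_snocD simp: abs_minus_commute)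
  moreover have "(\<forall>u\<in>tree_ball d n. length u = n \<longrightarrow> f u \<in> {0, 1})
        \<longleftrightarrow> (\<forall>u\<in>tree_sphere d n. f u \<in> {0, 1})"
    by (auto simp: tree_sphere_def tree_ball_def)
  ultimately show ?thesis
    unfolding lip01_def by blast
qed

lemma zero_in_lip01: "(\<lambda>_. 0) \<in> lip01 d n"
  by (simp add: lip01_iff tree_lip_def)

lemma lip01_dist_root:
  assumes "f \<in> lip01 d n"
  shows "u \<in> tree_ball d n \<Longrightarrow> \<bar>f u - f []\<bar> \<le> int (length u)"
proof (induction u rule: rev_induct)
  case (snoc i u)
  then have "\<bar>f (u @ [i]) - f u\<bar> \<le> 1" and "\<bar>f u - f []\<bar> \<le> int (length u)"
    using assms by (auto simp: lip01_iff tree_lip_def dest: tree_ball_snocD)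
  then show ?case
    by simp
qed simp

text \<open>The distance from \<open>y\<close> to \<open>{0, 1}\<close>; the count of Lipschitz functions with root value \<open>y\<close>
  depends on \<open>y\<close> only through it, by the symmetry \<open>f \<mapsto> 1 - f\<close>.\<close>
definition dist01 :: "int \<Rightarrow> nat" where
  "dist01 y = (if y \<le> 0 then nat (- y) else nat (y - 1))"

lemma dist01_eq_iff: "dist01 y = k \<longleftrightarrow> y = - int k \<or> y = int k + 1"
  unfolding dist01_def by (simp split: if_splits; arith)

lemma dist01_minus_of_nat [simp]: "dist01 (- int k) = k"
  by (simp add: dist01_eq_iff)

lemma dist01_of_nat_plus_1 [simp]: "dist01 (int k + 1) = k"
  by (simp add: dist01_eq_iff)

lemma dist01_neighbours_nonpos:
  "y \<le> 0 \<Longrightarrow> dist01 (y - 1) = Suc (dist01 y) \<and> dist01 (y + 1) = dist01 y - 1"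
  unfolding dist01_def by (simp; arith)

lemma dist01_neighbours_pos:
  "0 < y \<Longrightarrow> dist01 (y + 1) = Suc (dist01 y) \<and> dist01 (y - 1) = dist01 y - 1"
  unfolding dist01_def by (simp; arith)

lemma dist01_root_le:
  assumes "0 < d" and "f \<in> lip01 d n"
  shows "dist01 (f []) \<le> n"
proof -
  have "replicate n 0 \<in> tree_sphere d n"
    using \<open>0 < d\<close> by (simp add: tree_sphere_def set_replicate_conv_if)
  then have "f (replicate n 0) \<in> {0, 1}" and "\<bar>f (replicate n 0) - f []\<bar> \<le> int n"
    using assms(2) lip01_dist_root[OF assms(2), of "replicate n 0"] tree_sphere_subset_ball
    by (auto simp: lip01_iff)
  then show ?thesis
    unfolding dist01_def by auto
qed

definition supported_funs :: "'a set \<Rightarrow> 'b set \<Rightarrow> ('a \<Rightarrow> 'b::zero) set" where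
  "supported_funs A S = {g. (\<forall>v. v \<notin> A \<longrightarrow> g v = 0) \<and> (\<forall>v\<in>A. g v \<in> S)}"

lemma finite_supported_funs:
  assumes "finite A" and "finite S"
  shows "finite (supported_funs A S)"
proof (rule finite_imageD)
  show "inj_on (\<lambda>g. restrict g A) (supported_funs A S)"
  proof (intro inj_onI ext)
    fix g g' v
    assume "g \<in> supported_funs A S" "g' \<in> supported_funs A S" "restrict g A = restrict g' A"
    then show "g v = g' v"
      by (cases "v \<in> A") (auto simp: supported_funs_def dest: fun_cong[where x = v])
  qed
  have "(\<lambda>g. restrict g A) ` supported_funs A S \<subseteq> PiE A (\<lambda>_. S)"
    by (auto simp: supported_funs_def)
  then show "finite ((\<lambda>g. restrict g A) ` supported_funs A S)"
    using assms by (rule finite_subset[OF _ finite_PiE])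
qed

lemma lip01_subset_supported_funs:
  assumes "0 < d"
  shows "lip01 d n \<subseteq> supported_funs (tree_ball d n) {- int (2 * n) .. int (2 * n) + 1}"
proof
  fix f
  assume f: "f \<in> lip01 d n"
  have "- int n \<le> f [] \<and> f [] \<le> int n + 1"
    using dist01_root_le[OF assms f] by (auto simp: dist01_def split: if_splits)
  moreover have "\<bar>f u - f []\<bar> \<le> int n" if "u \<in> tree_ball d n" for u
    using lip01_dist_root[OF f that] that by (simp add: tree_ball_def)
  ultimately show "f \<in> supported_funs (tree_ball d n) {- int (2 * n) .. int (2 * n) + 1}"
    using f by (fastforce simp: supported_funs_def lip01_iff)
qed

lemma finite_lip01: "0 < d \<Longrightarrow> finite (lip01 d n)"
  by (rule finite_subset[OF lip01_subset_supported_funs finite_supported_funs])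
    (simp_all add: finite_tree_ball)

section \<open>Decomposition along a sphere\<close>

definition lip_on_ball :: "nat \<Rightarrow> nat \<Rightarrow> (nat list \<Rightarrow> int) \<Rightarrow> bool" where
  "lip_on_ball d r g \<longleftrightarrow> tree_lip d r g \<and> (\<forall>u. u \<notin> tree_ball d r \<longrightarrow> g u = 0)"

lemma lip_on_ball_restr_ball:
  assumes "f \<in> lip01 d n" and "r \<le> n"
  shows "lip_on_ball d r (restr_ball d r f)"
proof -
  have "\<bar>f (u @ [i]) - f u\<bar> \<le> 1" if "u @ [i] \<in> tree_ball d r" for u i
    using assms(1) subsetD[OF tree_ball_mono[OF assms(2)] that]
    by (simp add: lip01_iff tree_lip_def)
  then show ?thesis
    by (auto simp: lip_on_ball_def tree_lip_def restr_ball_def dest: tree_ball_snocD)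
qed

definition lip01_root :: "nat \<Rightarrow> nat \<Rightarrow> int \<Rightarrow> (nat list \<Rightarrow> int) set" where
  "lip01_root d h y = {f \<in> lip01 d h. f [] = y}"

definition restr_fibre :: "nat \<Rightarrow> nat \<Rightarrow> nat \<Rightarrow> (nat list \<Rightarrow> int) \<Rightarrow> (nat list \<Rightarrow> int) set" where
  "restr_fibre d n r g = {f \<in> lip01 d n. restr_ball d r f = g}"

definition subtree_at :: "nat \<Rightarrow> nat \<Rightarrow> nat list \<Rightarrow> (nat list \<Rightarrow> int) \<Rightarrow> nat list \<Rightarrow> int" where
  "subtree_at d m v f = (\<lambda>w. if w \<in> tree_ball d m then f (v @ w) else 0)"

definition sphere_subtrees :: "nat \<Rightarrow> nat \<Rightarrow> nat \<Rightarrow> (nat list \<Rightarrow> int) \<Rightarrow> nat list \<Rightarrow> nat list \<Rightarrow> int" where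
  "sphere_subtrees d n r f = (\<lambda>v\<in>tree_sphere d r. subtree_at d (n - r) v f)"

definition graft ::
    "nat \<Rightarrow> nat \<Rightarrow> nat \<Rightarrow> (nat list \<Rightarrow> int) \<Rightarrow> (nat list \<Rightarrow> nat list \<Rightarrow> int) \<Rightarrow> nat list \<Rightarrow> int" where
  "graft d n r g F = (\<lambda>u. if u \<in> tree_ball d r then g u
     else if u \<in> tree_ball d n then F (take r u) (drop r u) else 0)"

lemma subtree_at_in_lip01_root:
  assumes f: "f \<in> lip01 d n" and v: "v \<in> tree_sphere d r" and "r \<le> n"
  shows "subtree_at d (n - r) v f \<in> lip01_root d (n - r) (f v)"
proof -
  note in_ball = append_in_tree_ball_iff[OF v \<open>r \<le> n\<close>]
  have "tree_lip d (n - r) (subtree_at d (n - r) v f)"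
    unfolding tree_lip_def
  proof (intro allI impI)
    fix w i
    assume "w @ [i] \<in> tree_ball d (n - r)"
    then have "(v @ w) @ [i] \<in> tree_ball d n" and "w \<in> tree_ball d (n - r)"
      using in_ball[of "w @ [i]"] by (auto dest: tree_ball_snocD)
    moreover have "\<bar>f ((v @ w) @ [i]) - f (v @ w)\<bar> \<le> 1"
      using f \<open>(v @ w) @ [i] \<in> tree_ball d n\<close> unfolding lip01_iff tree_lip_def by blast
    ultimately show "\<bar>subtree_at d (n - r) v f (w @ [i]) - subtree_at d (n - r) v f w\<bar> \<le> 1"
      using \<open>w @ [i] \<in> tree_ball d (n - r)\<close> by (simp add: subtree_at_def)
  qed
  moreover have "subtree_at d (n - r) v f w \<in> {0, 1}" if "w \<in> tree_sphere d (n - r)" for w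
  proof -
    have "f (v @ w) \<in> {0, 1}"
      using f that append_in_tree_sphere_iff[OF v \<open>r \<le> n\<close>, of w] by (simp add: lip01_iff)
    moreover have "w \<in> tree_ball d (n - r)"
      using that tree_sphere_subset_ball by blast
    ultimately show ?thesis
      by (simp add: subtree_at_def)
  qed
  moreover have "subtree_at d (n - r) v f w = 0" if "w \<notin> tree_ball d (n - r)" for w
    using that by (simp add: subtree_at_def)
  moreover have "subtree_at d (n - r) v f [] = f v"
    by (simp add: subtree_at_def tree_ball_def)
  ultimately show ?thesis
    unfolding lip01_root_def lip01_iff by blast
qed

lemma tree_lip_graft:
  assumes g: "lip_on_ball d r g"
    and F: "F \<in> PiE (tree_sphere d r) (\<lambda>v. lip01_root d (n - r) (g v))"
  shows "tree_lip d n (graft d n r g F)"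
  unfolding tree_lip_def
proof (intro allI impI)
  fix u i
  assume ui: "u @ [i] \<in> tree_ball d n"
  let ?f = "graft d n r g F"
  have F_lip: "F v \<in> lip01 d (n - r)" if "v \<in> tree_sphere d r" for v
    using PiE_mem[OF F that] by (simp add: lip01_root_def)
  show "\<bar>?f (u @ [i]) - ?f u\<bar> \<le> 1"
  proof (cases "u @ [i] \<in> tree_ball d r")
    case True
    then show ?thesis
      using g tree_ball_snocD[OF True] by (simp add: graft_def lip_on_ball_def tree_lip_def)
  next
    case outside: False
    show ?thesis
    proof (cases "u \<in> tree_ball d r")
      case True
      \<comment> \<open>an edge leaving the \<open>r\<close>-ball is the root edge of the subtree grafted at \<open>u\<close>\<close>
      then have "u \<in> tree_sphere d r" and "[i] \<in> tree_ball d (n - r)"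
        using outside ui by (auto simp: tree_sphere_def tree_ball_def)
      then have "\<bar>F u ([] @ [i]) - F u []\<bar> \<le> 1"
        using F_lip[of u] unfolding lip01_iff tree_lip_def by (metis append_Nil)
      moreover have "take r (u @ [i]) = u" and "drop r (u @ [i]) = [i]"
        and "F u [] = g u"
        using \<open>u \<in> tree_sphere d r\<close> PiE_mem[OF F] by (auto simp: tree_sphere_def lip01_root_def)
      ultimately show ?thesis
        using True outside ui by (simp add: graft_def)
    next
      case False
      then have "take r u \<in> tree_sphere d r"
        using tree_ball_snocD[OF ui]
        by (auto simp: tree_sphere_def tree_ball_def dest: in_set_takeD)
      moreover have "take r (u @ [i]) = take r u" and "drop r (u @ [i]) = drop r u @ [i]"
        and "drop r u @ [i] \<in> tree_ball d (n - r)"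
        using False ui by (auto simp: tree_ball_def dest: in_set_dropD)
      ultimately show ?thesis
        using F_lip[of "take r u"] False outside ui
        by (simp add: graft_def lip01_iff tree_lip_def tree_ball_snocD[OF ui])
    qed
  qed
qed

lemma graft_in_restr_fibre:
  assumes "r \<le> n" and g: "lip_on_ball d r g"
    and F: "F \<in> PiE (tree_sphere d r) (\<lambda>v. lip01_root d (n - r) (g v))"
  shows "graft d n r g F \<in> restr_fibre d n r g"
proof -
  let ?f = "graft d n r g F"
  have F_lip: "F v \<in> lip01 d (n - r)" and F_root: "F v [] = g v" if "v \<in> tree_sphere d r" for v
    using PiE_mem[OF F that] by (simp_all add: lip01_root_def)
  have leaf: "?f u \<in> {0, 1}" if u: "u \<in> tree_sphere d n" for u
  proof (cases "u \<in> tree_ball d r")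
    case True
    then have "u \<in> tree_sphere d r" and "n - r = 0"
      using u \<open>r \<le> n\<close> by (auto simp: tree_sphere_def tree_ball_def)
    then show ?thesis
      using True F_lip[of u] F_root[of u] by (force simp: graft_def lip01_iff tree_sphere_def)
  next
    case False
    then have "take r u \<in> tree_sphere d r" and "drop r u \<in> tree_sphere d (n - r)"
      using u by (auto simp: tree_sphere_def tree_ball_def dest: in_set_takeD in_set_dropD)
    then show ?thesis
      using False u tree_sphere_subset_ball F_lip[of "take r u"]
      by (fastforce simp: graft_def lip01_iff)
  qed
  have outside: "?f u = 0" if "u \<notin> tree_ball d n" for u
  proof -
    have "u \<notin> tree_ball d r"
      using that tree_ball_mono[OF \<open>r \<le> n\<close>] by blast
    then show ?thesis
      using that g by (simp add: graft_def lip_on_ball_def)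
  qed
  have "?f \<in> lip01 d n"
    unfolding lip01_iff using tree_lip_graft[OF g F] leaf outside by blast
  moreover have "restr_ball d r ?f = g"
    using g by (auto simp: restr_ball_def graft_def lip_on_ball_def)
  ultimately show ?thesis
    by (simp add: restr_fibre_def)
qed

lemma graft_sphere_subtrees:
  assumes "f \<in> restr_fibre d n r g"
  shows "graft d n r g (sphere_subtrees d n r f) = f"
proof
  fix u
  have f: "f \<in> lip01 d n" and g: "g = restr_ball d r f"
    using assms by (auto simp: restr_fibre_def)
  show "graft d n r g (sphere_subtrees d n r f) u = f u"
  proof (cases "u \<in> tree_ball d n - tree_ball d r")
    case True
    then have "take r u \<in> tree_sphere d r" and "drop r u \<in> tree_ball d (n - r)"
      by (auto simp: tree_sphere_def tree_ball_def dest: in_set_takeD in_set_dropD)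
    then show ?thesis
      using True by (simp add: graft_def sphere_subtrees_def subtree_at_def)
  next
    case False
    then show ?thesis
      using f by (auto simp: graft_def g restr_ball_def lip01_iff)
  qed
qed

lemma sphere_subtrees_graft:
  assumes "r \<le> n" and F: "F \<in> PiE (tree_sphere d r) (\<lambda>v. lip01_root d (n - r) (g v))"
  shows "sphere_subtrees d n r (graft d n r g F) = F"
proof (intro ext)
  fix v w
  show "sphere_subtrees d n r (graft d n r g F) v w = F v w"
  proof (cases "v \<in> tree_sphere d r")
    case v: True
    have "F v \<in> lip01_root d (n - r) (g v)"
      using F v by (rule PiE_mem)
    then have F_lip: "F v \<in> lip01 d (n - r)" and F_root: "F v [] = g v"
      by (simp_all add: lip01_root_def)
    have "graft d n r g F (v @ w) = F v w" if w: "w \<in> tree_ball d (n - r)"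
    proof (cases "w = []")
      case True
      then show ?thesis
        using v F_root subsetD[OF tree_sphere_subset_ball] by (simp add: graft_def)
    next
      case False
      then have "v @ w \<notin> tree_ball d r" and "length v = r"
        using v by (auto simp: tree_sphere_def tree_ball_def)
      then show ?thesis
        using append_in_tree_ball_iff[OF v \<open>r \<le> n\<close>] w by (simp add: graft_def)
    qed
    moreover have "F v w = 0" if "w \<notin> tree_ball d (n - r)"
      using F_lip that by (simp add: lip01_iff)
    ultimately show ?thesis
      using v by (simp add: sphere_subtrees_def subtree_at_def)
  next
    case False
    then have "F v = undefined"
      by (rule PiE_arb[OF F])
    with False show ?thesis
      by (simp add: sphere_subtrees_def)
  qed
qed

lemma bij_betw_sphere_subtrees:
  assumes "r \<le> n" and "lip_on_ball d r g"
  shows "bij_betw (sphere_subtrees d n r) (restr_fibre d n r g)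
           (PiE (tree_sphere d r) (\<lambda>v. lip01_root d (n - r) (g v)))"
proof (rule bij_betw_byWitness[where f' = "graft d n r g"])
  show "sphere_subtrees d n r ` restr_fibre d n r g
      \<subseteq> PiE (tree_sphere d r) (\<lambda>v. lip01_root d (n - r) (g v))"
  proof clarify
    fix f
    assume "f \<in> restr_fibre d n r g"
    then have f: "f \<in> lip01 d n" and g: "g = restr_ball d r f"
      by (auto simp: restr_fibre_def)
    have "subtree_at d (n - r) v f \<in> lip01_root d (n - r) (g v)" if "v \<in> tree_sphere d r" for v
      using subtree_at_in_lip01_root[OF f that \<open>r \<le> n\<close>] subsetD[OF tree_sphere_subset_ball that]
      by (simp add: g restr_ball_def)
    then show "sphere_subtrees d n r f \<in> PiE (tree_sphere d r) (\<lambda>v. lip01_root d (n - r) (g v))"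
      by (simp add: sphere_subtrees_def)
  qed
  show "\<forall>f\<in>restr_fibre d n r g. graft d n r g (sphere_subtrees d n r f) = f"
    by (simp add: graft_sphere_subtrees)
  show "\<forall>F\<in>PiE (tree_sphere d r) (\<lambda>v. lip01_root d (n - r) (g v)).
          sphere_subtrees d n r (graft d n r g F) = F"
    by (simp add: sphere_subtrees_graft[OF \<open>r \<le> n\<close>])
  show "graft d n r g ` PiE (tree_sphere d r) (\<lambda>v. lip01_root d (n - r) (g v))
      \<subseteq> restr_fibre d n r g"
    by (rule image_subsetI) (rule graft_in_restr_fibre[OF assms])
qed

lemma card_restr_fibre:
  assumes "r \<le> n" and "lip_on_ball d r g"
  shows "card (restr_fibre d n r g) = (\<Prod>v\<in>tree_sphere d r. card (lip01_root d (n - r) (g v)))"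
  using bij_betw_same_card[OF bij_betw_sphere_subtrees[OF assms]]
  by (simp add: card_PiE finite_tree_sphere)

section \<open>Counting by the root value\<close>

definition lip_star :: "nat \<Rightarrow> int \<Rightarrow> (nat list \<Rightarrow> int) set" where
  "lip_star d x = {g. lip_on_ball d 1 g \<and> g [] = x}"

lemma lip01_root_Suc_eq_UN:
  "lip01_root d (Suc h) x = (\<Union>g\<in>lip_star d x. restr_fibre d (Suc h) 1 g)"
proof (intro equalityI subsetI)
  fix f
  assume f: "f \<in> lip01_root d (Suc h) x"
  then have "restr_ball d 1 f \<in> lip_star d x"
    using lip_on_ball_restr_ball[of f d "Suc h" 1]
    by (simp add: lip_star_def lip01_root_def restr_ball_def tree_ball_def)
  moreover have "f \<in> restr_fibre d (Suc h) 1 (restr_ball d 1 f)"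
    using f by (simp add: restr_fibre_def lip01_root_def)
  ultimately show "f \<in> (\<Union>g\<in>lip_star d x. restr_fibre d (Suc h) 1 g)"
    by blast
next
  fix f
  assume "f \<in> (\<Union>g\<in>lip_star d x. restr_fibre d (Suc h) 1 g)"
  then obtain g where g: "g \<in> lip_star d x" and f: "f \<in> lip01 d (Suc h)"
    and fg: "g = restr_ball d 1 f"
    by (auto simp: restr_fibre_def)
  have "f [] = x"
    using g unfolding fg by (simp add: lip_star_def restr_ball_def tree_ball_def)
  then show "f \<in> lip01_root d (Suc h) x"
    using f by (simp add: lip01_root_def)
qed

lemma tree_ball_1_eq: "tree_ball d 1 = insert [] (tree_sphere d 1)"
  by (auto simp: tree_ball_def tree_sphere_def le_Suc_eq length_Suc_conv)

lemma tree_lip_1_iff: "tree_lip d 1 g \<longleftrightarrow> (\<forall>v\<in>tree_sphere d 1. \<bar>g v - g []\<bar> \<le> 1)"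
proof
  assume lip: "tree_lip d 1 g"
  show "\<forall>v\<in>tree_sphere d 1. \<bar>g v - g []\<bar> \<le> 1"
  proof
    fix v
    assume "v \<in> tree_sphere d 1"
    then obtain i where "v = [] @ [i]" and "[] @ [i] \<in> tree_ball d 1"
      by (auto simp: tree_sphere_def tree_ball_def length_Suc_conv)
    then show "\<bar>g v - g []\<bar> \<le> 1"
      using lip unfolding tree_lip_def by blast
  qed
next
  assume sphere: "\<forall>v\<in>tree_sphere d 1. \<bar>g v - g []\<bar> \<le> 1"
  show "tree_lip d 1 g"
    unfolding tree_lip_def
  proof (intro allI impI)
    fix u i
    assume "u @ [i] \<in> tree_ball d 1"
    then have "u = []" and "[i] \<in> tree_sphere d 1"
      by (auto simp: tree_ball_def tree_sphere_def)
    then show "\<bar>g (u @ [i]) - g u\<bar> \<le> 1"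
      using sphere by simp
  qed
qed

lemma lip_star_iff:
  "g \<in> lip_star d x \<longleftrightarrow> g [] = x \<and> (\<forall>v\<in>tree_sphere d 1. g v \<in> {x - 1, x, x + 1})
     \<and> (\<forall>u. u \<noteq> [] \<longrightarrow> u \<notin> tree_sphere d 1 \<longrightarrow> g u = 0)"
proof -
  have "\<bar>z - x\<bar> \<le> 1 \<longleftrightarrow> z \<in> {x - 1, x, x + 1}" for z :: int
    by auto
  then show ?thesis
    unfolding lip_star_def lip_on_ball_def tree_lip_1_iff tree_ball_1_eq by auto
qed

lemma bij_betw_lip_star:
  "bij_betw (\<lambda>g. restrict g (tree_sphere d 1)) (lip_star d x)
     (PiE (tree_sphere d 1) (\<lambda>_. {x - 1, x, x + 1}))"
proof -
  define extend :: "(nat list \<Rightarrow> int) \<Rightarrow> nat list \<Rightarrow> int"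
    where "extend c u = (if u = [] then x else if u \<in> tree_sphere d 1 then c u else 0)" for c u
  have root: "[] \<notin> tree_sphere d 1"
    by (simp add: tree_sphere_def)
  show ?thesis
  proof (rule bij_betw_byWitness[where f' = extend])
    show "\<forall>g\<in>lip_star d x. extend (restrict g (tree_sphere d 1)) = g"
      by (auto simp: extend_def lip_star_iff fun_eq_iff)
    show "\<forall>c\<in>PiE (tree_sphere d 1) (\<lambda>_. {x - 1, x, x + 1}).
        restrict (extend c) (tree_sphere d 1) = c"
    proof (intro ballI ext)
      fix c v
      assume "c \<in> PiE (tree_sphere d 1) (\<lambda>_. {x - 1, x, x + 1})"
      then show "restrict (extend c) (tree_sphere d 1) v = c v"
        using root PiE_arb[of c _ _ v] by (auto simp: extend_def)
    qed
    show "(\<lambda>g. restrict g (tree_sphere d 1)) ` lip_star d x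
        \<subseteq> PiE (tree_sphere d 1) (\<lambda>_. {x - 1, x, x + 1})"
      by (auto simp: lip_star_iff)
    show "extend ` PiE (tree_sphere d 1) (\<lambda>_. {x - 1, x, x + 1}) \<subseteq> lip_star d x"
      using root by (auto simp: extend_def lip_star_iff)
  qed
qed

lemma card_lip01_root_Suc:
  assumes "0 < d"
  shows "card (lip01_root d (Suc h) x)
    = (card (lip01_root d h (x - 1)) + card (lip01_root d h x) + card (lip01_root d h (x + 1))) ^ d"
proof -
  define \<phi> where "\<phi> y = card (lip01_root d h y)" for y
  have "card (lip01_root d (Suc h) x) = (\<Sum>g\<in>lip_star d x. card (restr_fibre d (Suc h) 1 g))"
    unfolding lip01_root_Suc_eq_UN
  proof (rule card_UN_disjoint)
    show "finite (lip_star d x)"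
      using bij_betw_finite[OF bij_betw_lip_star] by (simp add: finite_PiE finite_tree_sphere)
    show "\<forall>g\<in>lip_star d x. finite (restr_fibre d (Suc h) 1 g)"
      using finite_lip01[OF assms] by (auto simp: restr_fibre_def)
  qed (auto simp: restr_fibre_def)
  also have "\<dots> = (\<Sum>g\<in>lip_star d x. \<Prod>v\<in>tree_sphere d 1. \<phi> (restrict g (tree_sphere d 1) v))"
    by (intro sum.cong refl) (simp add: card_restr_fibre lip_star_def \<phi>_def)
  also have "\<dots> = (\<Sum>c\<in>PiE (tree_sphere d 1) (\<lambda>_. {x - 1, x, x + 1}). \<Prod>v\<in>tree_sphere d 1. \<phi> (c v))"
    by (rule sum.reindex_bij_betw[OF bij_betw_lip_star])
  also have "\<dots> = (\<Prod>v\<in>tree_sphere d 1. \<Sum>y\<in>{x - 1, x, x + 1}. \<phi> y)"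
    by (rule prod_sum_PiE[symmetric]) (simp_all add: finite_tree_sphere)
  also have "\<dots> = (\<phi> (x - 1) + \<phi> x + \<phi> (x + 1)) ^ d"
    by (simp add: card_tree_sphere add.assoc)
  finally show ?thesis
    unfolding \<phi>_def .
qed

lemma lip01_0_iff: "f \<in> lip01 d 0 \<longleftrightarrow> f [] \<in> {0, 1} \<and> (\<forall>u. u \<noteq> [] \<longrightarrow> f u = 0)"
proof -
  have "tree_ball d 0 = {[]}" and "tree_sphere d 0 = {[]}" and "tree_lip d 0 f"
    by (auto simp: tree_ball_def tree_sphere_def tree_lip_def)
  then show ?thesis
    by (simp add: lip01_iff)
qed

lemma card_lip01_root_0: "card (lip01_root d 0 y) = (if y \<in> {0, 1} then 1 else 0)"
proof -
  have "f \<in> lip01_root d 0 y \<longleftrightarrow> y \<in> {0, 1} \<and> f = (\<lambda>u. if u = [] then y else 0)" for f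
  proof
    assume "f \<in> lip01_root d 0 y"
    then have "f [] = y" "y \<in> {0, 1}" "\<forall>u. u \<noteq> [] \<longrightarrow> f u = 0"
      by (auto simp: lip01_root_def lip01_0_iff)
    then show "y \<in> {0, 1} \<and> f = (\<lambda>u. if u = [] then y else 0)"
      by (intro conjI ext) auto
  qed (simp add: lip01_root_def lip01_0_iff)
  then have "lip01_root d 0 y = (if y \<in> {0, 1} then {\<lambda>u. if u = [] then y else 0} else {})"
    by auto
  then show ?thesis
    by simp
qed

lemma card_lip01_root:
  assumes "0 < d"
  shows "real (card (lip01_root d h y)) = lip_count d h (dist01 y)"
proof (induction h arbitrary: y)
  case 0
  show ?case
    by (simp add: card_lip01_root_0 dist01_def)
next
  case (Suc h)
  have "real (card (lip01_root d (Suc h) y))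
      = (lip_count d h (dist01 (y - 1)) + lip_count d h (dist01 y)
          + lip_count d h (dist01 (y + 1))) ^ d"
    by (simp add: card_lip01_root_Suc[OF assms] Suc.IH)
  also have "\<dots> = lip_count d (Suc h) (dist01 y)"
  proof (cases "y \<le> 0")
    case True
    then show ?thesis
      using dist01_neighbours_nonpos[of y] by (simp add: branch_op_def)
  next
    case False
    then show ?thesis
      using dist01_neighbours_pos[of y] by (simp add: branch_op_def algebra_simps)
  qed
  finally show ?case .
qed

lemma card_lip01_dist01_in:
  assumes "0 < d" and "K \<subseteq> {..n}"
  shows "real (card {f \<in> lip01 d n. dist01 (f []) \<in> K}) = (\<Sum>k\<in>K. 2 * lip_count d n k)"
proof -
  have "finite K"
    using assms(2) finite_subset by blast
  have fin: "finite (lip01_root d n y)" for y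
    using finite_lip01[OF assms(1)] by (rule finite_subset[rotated]) (auto simp: lip01_root_def)
  define R where "R k = lip01_root d n (- int k) \<union> lip01_root d n (int k + 1)" for k
  have "{f \<in> lip01 d n. dist01 (f []) \<in> K} = (\<Union>k\<in>K. R k)"
  proof (intro equalityI subsetI)
    fix f
    assume "f \<in> {f \<in> lip01 d n. dist01 (f []) \<in> K}"
    then show "f \<in> (\<Union>k\<in>K. R k)"
      using dist01_eq_iff[of "f []" "dist01 (f [])"] by (auto simp: R_def lip01_root_def)
  next
    fix f
    assume "f \<in> (\<Union>k\<in>K. R k)"
    then show "f \<in> {f \<in> lip01 d n. dist01 (f []) \<in> K}"
      by (auto simp: R_def lip01_root_def dist01_def)
  qed
  moreover have "card (\<Union>k\<in>K. R k) = (\<Sum>k\<in>K. card (R k))"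
  proof (rule card_UN_disjoint[OF \<open>finite K\<close>])
    show "\<forall>k\<in>K. finite (R k)"
      using fin by (simp add: R_def)
    show "\<forall>k\<in>K. \<forall>j\<in>K. k \<noteq> j \<longrightarrow> R k \<inter> R j = {}"
      by (auto simp: R_def lip01_root_def)
  qed
  ultimately have "card {f \<in> lip01 d n. dist01 (f []) \<in> K} = (\<Sum>k\<in>K. card (R k))"
    by simp
  also have "\<dots> = (\<Sum>k\<in>K. card (lip01_root d n (- int k)) + card (lip01_root d n (int k + 1)))"
    unfolding R_def by (intro sum.cong refl card_Un_disjoint fin) (auto simp: lip01_root_def)
  finally show ?thesis
    by (simp add: card_lip01_root[OF assms(1)])
qed

lemma card_lip01:
  assumes "0 < d"
  shows "real (card (lip01 d n)) = 2 * lip_count d n 0 * lip_ratio_sum d n"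
proof -
  have "{f \<in> lip01 d n. dist01 (f []) \<in> {..n}} = lip01 d n"
    using dist01_root_le[OF assms] by auto
  then have "real (card (lip01 d n)) = (\<Sum>k\<le>n. 2 * lip_count d n k)"
    using card_lip01_dist01_in[OF assms, of "{..n}" n] by simp
  then show ?thesis
    using lip_count_0_pos[of d n] by (simp add: lip_ratio_sum_def lip_ratio_def sum_distrib_left)
qed

section \<open>The local limit\<close>

lemma tight_pmf_limit:
  fixes P :: "nat \<Rightarrow> 'a pmf" and q :: "'a \<Rightarrow> real"
  assumes lim: "\<And>x. (\<lambda>n. pmf (P n) x) \<longlonglongrightarrow> q x"
    and tight: "\<And>\<epsilon>. 0 < \<epsilon> \<Longrightarrow> \<exists>F N. finite F \<and> (\<forall>n\<ge>N. 1 - \<epsilon> \<le> measure_pmf.prob (P n) F)"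
  shows "\<exists>p. \<forall>x. pmf p x = q x"
proof -
  have q_nonneg: "0 \<le> q x" for x
    using lim[of x] by (rule LIMSEQ_le_const) simp
  have prob_tendsto: "(\<lambda>n. measure_pmf.prob (P n) F) \<longlonglongrightarrow> sum q F" if "finite F" for F
    using tendsto_sum[of F "\<lambda>x n. pmf (P n) x", OF lim]
    by (simp add: measure_measure_pmf_finite[OF that])
  have sum_le_1: "sum q F \<le> 1" if "finite F" for F
    using prob_tendsto[OF that] by (rule LIMSEQ_le_const2) (simp add: measure_pmf.prob_le_1)
  have summable: "q summable_on UNIV"
    using q_nonneg sum_le_1 by (intro nonneg_bdd_above_summable_on) (auto simp: bdd_above_def)
  have "infsum q UNIV \<le> 1"
    using sum_le_1 by (intro infsum_le_finite_sums[OF summable])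
  moreover have "1 \<le> infsum q UNIV"
  proof (rule field_le_epsilon)
    fix \<epsilon> :: real
    assume "0 < \<epsilon>"
    then obtain F N where "finite F" and F: "\<forall>n\<ge>N. 1 - \<epsilon> \<le> measure_pmf.prob (P n) F"
      using tight by blast
    have "1 - \<epsilon> \<le> sum q F"
      using prob_tendsto[OF \<open>finite F\<close>] by (rule LIMSEQ_le_const) (use F in blast)
    also have "\<dots> \<le> infsum q UNIV"
      by (rule finite_sum_le_infsum[OF summable \<open>finite F\<close>]) (simp_all add: q_nonneg)
    finally show "1 \<le> infsum q UNIV + \<epsilon>"
      by simp
  qed
  ultimately have "infsum q UNIV = 1"
    by simp
  moreover have abs_summable: "Infinite_Set_Sum.abs_summable_on q UNIV"
    using sum_le_1 q_nonneg by (intro abs_summable_finite_sumsI[where B = 1]) simp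
  ultimately have "(\<integral>\<^sup>+x. ennreal (q x) \<partial>count_space UNIV) = 1"
    using nn_integral_conv_infsetsum[OF abs_summable] q_nonneg infsetsum_infsum[OF abs_summable]
    by simp
  then have "pmf (embed_pmf q) x = q x" for x
    using q_nonneg by (intro pmf_embed_pmf)
  then show ?thesis
    by blast
qed

lemma lip01_nonempty: "lip01 d n \<noteq> {}"
  using zero_in_lip01 by blast

lemma set_pmf_mu01: "0 < d \<Longrightarrow> set_pmf (mu01 d n) = lip01 d n"
  by (simp add: mu01_def set_pmf_of_set lip01_nonempty finite_lip01)

lemma prob_mu01:
  "0 < d \<Longrightarrow> measure_pmf.prob (mu01 d n) A = real (card (lip01 d n \<inter> A)) / real (card (lip01 d n))"
  by (simp add: mu01_def measure_pmf_of_set lip01_nonempty finite_lip01)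

lemma pmf_restr_ball_mu01:
  assumes "0 < d"
  shows "pmf (map_pmf (restr_ball d r) (mu01 d n)) g
    = real (card (restr_fibre d n r g)) / real (card (lip01 d n))"
proof -
  have "lip01 d n \<inter> restr_ball d r -` {g} = restr_fibre d n r g"
    by (auto simp: restr_fibre_def)
  then show ?thesis
    by (simp add: pmf_map prob_mu01[OF assms])
qed

lemma pmf_restr_ball_mu01_eq:
  assumes "0 < d" and "lip_on_ball d r g"
  shows "pmf (map_pmf (restr_ball d r) (mu01 d (h + r))) g
    = (\<Prod>v\<in>tree_sphere d r. lip_ratio d h (dist01 (g v)))
        / (2 * count_growth d r h * lip_ratio_sum d (h + r))"
proof -
  let ?V = "lip_count d h 0"
  have "0 < ?V"
    by (rule lip_count_0_pos)
  have "real (card (restr_fibre d (h + r) r g))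
      = (\<Prod>v\<in>tree_sphere d r. lip_ratio d h (dist01 (g v)) * ?V)"
    using \<open>0 < ?V\<close>
    by (simp add: card_restr_fibre assms(2) card_lip01_root[OF assms(1)] lip_ratio_def)
  also have "\<dots> = (\<Prod>v\<in>tree_sphere d r. lip_ratio d h (dist01 (g v))) * ?V ^ (d ^ r)"
    by (simp add: prod.distrib card_tree_sphere)
  finally have "real (card (restr_fibre d (h + r) r g))
      = (\<Prod>v\<in>tree_sphere d r. lip_ratio d h (dist01 (g v))) * ?V ^ (d ^ r)" .
  moreover have "real (card (lip01 d (h + r)))
      = 2 * (count_growth d r h * ?V ^ (d ^ r)) * lip_ratio_sum d (h + r)"
    using card_lip01[OF assms(1)] \<open>0 < ?V\<close> by (simp add: count_growth_def)
  ultimately show ?thesis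
    using \<open>0 < ?V\<close> count_growth_pos[of d r h] lip_ratio_sum_ge_1[of d "h + r"]
    by (simp add: pmf_restr_ball_mu01[OF assms(1)])
qed

lemma pmf_restr_ball_mu01_eq_0:
  assumes "0 < d" and "r \<le> n" and "\<not> lip_on_ball d r g"
  shows "pmf (map_pmf (restr_ball d r) (mu01 d n)) g = 0"
proof -
  have "restr_fibre d n r g = {}"
    using lip_on_ball_restr_ball[OF _ \<open>r \<le> n\<close>] assms(3) by (auto simp: restr_fibre_def)
  then show ?thesis
    by (simp add: pmf_restr_ball_mu01[OF assms(1)])
qed

lemma convergent_pmf_restr_ball_mu01:
  assumes "2 \<le> d"
  shows "convergent (\<lambda>n. pmf (map_pmf (restr_ball d r) (mu01 d n)) g)"
proof (cases "lip_on_ball d r g")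
  case True
  obtain C where "1 \<le> C" and C: "(\<lambda>h. count_growth d r h) \<longlonglongrightarrow> C"
    using count_growth_tendsto[OF assms] by blast
  obtain S where "1 \<le> S" and S: "lip_ratio_sum d \<longlonglongrightarrow> S"
    using lip_ratio_sum_tendsto[OF assms] by blast
  have "(\<lambda>h. lip_ratio d h k) \<longlonglongrightarrow> lim (\<lambda>h. lip_ratio d h k)" for k
    using convergent_lip_ratio[OF assms] by (simp add: convergent_LIMSEQ_iff)
  then have "(\<lambda>h. (\<Prod>v\<in>tree_sphere d r. lip_ratio d h (dist01 (g v)))
      / (2 * count_growth d r h * lip_ratio_sum d (h + r)))
    \<longlonglongrightarrow> (\<Prod>v\<in>tree_sphere d r. lim (\<lambda>h. lip_ratio d h (dist01 (g v)))) / (2 * C * S)"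
    using \<open>1 \<le> C\<close> \<open>1 \<le> S\<close> by (intro tendsto_intros C LIMSEQ_ignore_initial_segment[OF S]) auto
  then have "(\<lambda>h. pmf (map_pmf (restr_ball d r) (mu01 d (h + r))) g)
    \<longlonglongrightarrow> (\<Prod>v\<in>tree_sphere d r. lim (\<lambda>h. lip_ratio d h (dist01 (g v)))) / (2 * C * S)"
    using assms by (simp add: pmf_restr_ball_mu01_eq True)
  then show ?thesis
    by (auto intro: convergentI LIMSEQ_offset)
next
  case False
  have "pmf (map_pmf (restr_ball d r) (mu01 d (h + r))) g = 0" for h
    using assms False by (intro pmf_restr_ball_mu01_eq_0) auto
  then have "(\<lambda>h. pmf (map_pmf (restr_ball d r) (mu01 d (h + r))) g) \<longlonglongrightarrow> 0"
    by simp
  then show ?thesis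
    by (auto intro: convergentI LIMSEQ_offset)
qed

lemma prob_mu01_dist01_root_gt:
  assumes "2 \<le> d"
  shows "measure_pmf.prob (mu01 d n) {f. M < dist01 (f [])} \<le> (1/2) ^ M"
proof -
  have "0 < d"
    using assms by simp
  let ?V = "lip_count d n 0"
  have tail_eq: "lip01 d n \<inter> {f. M < dist01 (f [])} = {f \<in> lip01 d n. dist01 (f []) \<in> {M<..n}}"
    using dist01_root_le[OF \<open>0 < d\<close>] by auto
  have "real (card (lip01 d n \<inter> {f. M < dist01 (f [])})) = (\<Sum>k\<in>{M<..n}. 2 * lip_count d n k)"
    unfolding tail_eq by (rule card_lip01_dist01_in[OF \<open>0 < d\<close>]) auto
  also have "\<dots> \<le> (\<Sum>k\<in>{M<..n}. 2 * ((1/2) ^ k * ?V))"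
    by (intro sum_mono mult_left_mono lip_count_le_geometric[OF assms]) simp
  also have "\<dots> = 2 * ?V * (\<Sum>k\<in>{M<..n}. (1/2) ^ k)"
    by (simp add: sum_distrib_left mult_ac)
  also have "\<dots> \<le> 2 * ?V * (lip_ratio_sum d n * (1/2) ^ M)"
  proof -
    have "1 * (1/2::real) ^ M \<le> lip_ratio_sum d n * (1/2) ^ M"
      by (intro mult_right_mono lip_ratio_sum_ge_1) simp
    then have "(\<Sum>k\<in>{M<..n}. (1/2::real) ^ k) \<le> lip_ratio_sum d n * (1/2) ^ M"
      using geometric_tail_le[of M n] by linarith
    then show ?thesis
      using lip_count_0_pos[of d n] by simp
  qed
  also have "\<dots> = (1/2) ^ M * real (card (lip01 d n))"
    by (simp add: card_lip01[OF \<open>0 < d\<close>] mult_ac)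
  finally show ?thesis
    using lip01_nonempty finite_lip01[OF \<open>0 < d\<close>]
    by (simp add: prob_mu01[OF \<open>0 < d\<close>] divide_simps card_gt_0_iff)
qed

lemma tight_restr_ball_mu01:
  assumes "2 \<le> d" and "0 < \<epsilon>"
  shows "\<exists>F N. finite F \<and> (\<forall>n\<ge>N. 1 - \<epsilon> \<le> measure_pmf.prob (map_pmf (restr_ball d r) (mu01 d n)) F)"
proof -
  obtain M where "(1/2) ^ M < \<epsilon>"
    using real_arch_pow_inv[OF \<open>0 < \<epsilon>\<close>, of "1/2"] by auto
  define F where "F = supported_funs (tree_ball d r) {- int (M + r) .. int (M + r) + 1}"
  have "1 - \<epsilon> \<le> measure_pmf.prob (map_pmf (restr_ball d r) (mu01 d n)) F" if "r \<le> n" for n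
  proof -
    \<comment> \<open>a root value within distance \<open>M\<close> of \<open>{0, 1}\<close> confines the whole \<open>r\<close>-ball to a finite box\<close>
    have "restr_ball d r f \<in> F" if f: "f \<in> lip01 d n" and "dist01 (f []) \<le> M" for f
    proof -
      have "\<bar>f v - f []\<bar> \<le> int r" if "v \<in> tree_ball d r" for v
        using lip01_dist_root[OF f] subsetD[OF tree_ball_mono[OF \<open>r \<le> n\<close>] that] that
        by (fastforce simp: tree_ball_def)
      moreover have "- int M \<le> f [] \<and> f [] \<le> int M + 1"
        using \<open>dist01 (f []) \<le> M\<close> by (auto simp: dist01_def split: if_splits)
      ultimately show ?thesis
        by (fastforce simp: F_def supported_funs_def restr_ball_def)
    qed
    then have "measure_pmf.prob (mu01 d n) {f. dist01 (f []) \<le> M}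
        \<le> measure_pmf.prob (mu01 d n) (restr_ball d r -` F)"
      using assms(1) by (intro measure_pmf.finite_measure_mono_AE AE_pmfI) (auto simp: set_pmf_mu01)
    moreover have "measure_pmf.prob (mu01 d n) {f. dist01 (f []) \<le> M}
        = 1 - measure_pmf.prob (mu01 d n) {f. M < dist01 (f [])}"
      using measure_pmf.prob_compl[of "{f. M < dist01 (f [])}" "mu01 d n"]
      by (simp add: set_diff_eq not_less)
    ultimately show ?thesis
      using prob_mu01_dist01_root_gt[OF assms(1), of n M] \<open>(1/2) ^ M < \<epsilon>\<close>
      by (simp add: measure_map_pmf)
  qed
  moreover have "finite F"
    unfolding F_def by (simp add: finite_supported_funs finite_tree_ball)
  ultimately show ?thesis
    by blast
qed

theorem theorem1p2:
  fixes d :: nat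
  assumes "2 \<le> d"
  shows "\<forall>r. \<exists>p :: (nat list \<Rightarrow> int) pmf. \<forall>g.
           (\<lambda>n. pmf (map_pmf (restr_ball d r) (mu01 d n)) g) \<longlonglongrightarrow> pmf p g"
proof
  fix r
  let ?\<pi> = "\<lambda>n. map_pmf (restr_ball d r) (mu01 d n)"
  have lim: "(\<lambda>n. pmf (?\<pi> n) g) \<longlonglongrightarrow> lim (\<lambda>n. pmf (?\<pi> n) g)" for g
    using convergent_pmf_restr_ball_mu01[OF assms] by (simp add: convergent_LIMSEQ_iff)
  obtain p where "\<forall>g. pmf p g = lim (\<lambda>n. pmf (?\<pi> n) g)"
    using tight_pmf_limit[OF lim tight_restr_ball_mu01[OF assms]] by blast
  then have "\<forall>g. (\<lambda>n. pmf (?\<pi> n) g) \<longlonglongrightarrow> pmf p g"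
    using lim by simp
  then show "\<exists>p. \<forall>g. (\<lambda>n. pmf (?\<pi> n) g) \<longlonglongrightarrow> pmf p g"
    by blast
qed

end
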